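(* Let $\lambda>0$ and $\theta\in(0,\pi/2)$. For each $m>0$ set $n=m\tan\theta$, $X=(\lambda,0)$, $Y=(0,0)$, $Z=(m,n)$, and let $\varphi_m(\alpha,\beta)=\frac12(\alpha^2+2b\alpha\beta+a\beta^2)+c\alpha+d\beta$ be the conic satisfying (P1) $\varphi_m(X)=\varphi_m(Y)=\varphi_m(Z)=0$ and (P2) $Y-X$ is a positive multiple of $-\nabla\varphi_m(X)$ and $Z-Y$ is a positive multiple of $-\nabla\varphi_m(Y)$. Call $\{\varphi_m=0\}$ admissible if it is an ellipse. Then the set of centers of all admissible ellipses (over all $m>0$) is the semiline $$\mathcal{C}=\Big\{(u,v)\in\mathbb{R}^2:\ u=\frac{\lambda}{2}-\frac{\tan\theta}{2}v,\ v\in(0,+\infty)\Big\}.$$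
   Context: The center of an ellipse $\{\varphi=0\}$ is the point where $\nabla\varphi=0$. *)

theory Defs
  imports "HOL-Analysis.Analysis"
begin

definition conic :: "real \<Rightarrow> real \<Rightarrow> real \<Rightarrow> real \<Rightarrow> real \<times> real \<Rightarrow> real" where
  "conic a b c d = (\<lambda>(x, y). (x\<^sup>2 + 2 * b * x * y + a * y\<^sup>2) / 2 + c * x + d * y)"

definition grad :: "(real \<times> real \<Rightarrow> real) \<Rightarrow> real \<times> real \<Rightarrow> real \<times> real" where
  "grad f p = (SOME g. (f has_derivative (\<lambda>h. g \<bullet> h)) (at p))"

text \<open>A (nondegenerate) ellipse in the plane: a set of the form
  {x. (x - p)^T M (x - p) = 1} with M symmetric positive definite.\<close>
definition is_ellipse :: "(real \<times> real) set \<Rightarrow> bool" where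
  "is_ellipse S \<longleftrightarrow> (\<exists>p A B C. A > 0 \<and> A * C - B\<^sup>2 > 0 \<and>
     S = {x. A * (fst x - fst p)\<^sup>2 + 2 * B * (fst x - fst p) * (snd x - snd p)
             + C * (snd x - snd p)\<^sup>2 = 1})"

end

theory Submission
  imports Defs
begin

text \<open>Vanishing at X and the tangency condition at X force c = -l/2 and d = -b l; the
  tangency condition at Y then gives b = (tan \<theta>)/2, leaving a and m free. The centre (u, v)
  solves u + b v = l/2 and (a - b^2) v = b l/2. The zero set is an ellipse exactly when the
  quadratic part is positive definite, a > b^2, which forces v > 0; conversely every v > 0 is
  reached with a = b^2 + b l/(2 v), m being the second intersection of the conic with the ray
  of slope tan \<theta> through Y.\<close>

lemma conic_Pair [simp]:
  "conic a b c d (x, y) = (x\<^sup>2 + 2 * b * x * y + a * y\<^sup>2) / 2 + c * x + d * y"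
  by (simp add: conic_def)

lemma grad_eqI:
  assumes "(f has_derivative (\<lambda>h. g \<bullet> h)) (at p)"
  shows "grad f p = g"
proof -
  have "(f has_derivative (\<lambda>h. grad f p \<bullet> h)) (at p)"
    unfolding grad_def using assms by (rule someI)
  then have "(\<lambda>h. grad f p \<bullet> h) = (\<lambda>h. g \<bullet> h)"
    using assms by (rule has_derivative_unique)
  then have "(grad f p - g) \<bullet> (grad f p - g) = 0"
    by (metis inner_diff_left right_minus_eq)
  then show ?thesis by simp
qed

lemma grad_conic:
  "grad (conic a b c d) p = (fst p + b * snd p + c, b * fst p + a * snd p + d)"
proof (rule grad_eqI)
  show "(conic a b c d has_derivative (\<lambda>h. (fst p + b * snd p + c, b * fst p + a * snd p + d) \<bullet> h)) (at p)"
    unfolding conic_def split_beta'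
    by (auto intro!: derivative_eq_intros simp: fun_eq_iff inner_prod_def algebra_simps power2_eq_square)
qed

lemma conic_at_center:
  assumes "grad (conic a b c d) p = 0"
  shows "conic a b c d z = conic a b c d p + conic a b 0 0 (z - p)"
proof -
  obtain u v x y where p: "p = (u, v)" and z: "z = (x, y)" by fastforce
  have c: "c = - u - b * v" and d: "d = - b * u - a * v"
    using assms by (auto simp: grad_conic p zero_prod_def)
  show ?thesis
    by (simp add: p z c d power2_eq_square field_simps)
qed

lemma conic_quadratic_part_pos:
  assumes "b\<^sup>2 < a" and "z \<noteq> 0"
  shows "conic a b 0 0 z > 0"
proof (cases z)
  case (Pair x y)
  have "2 * conic a b 0 0 z = (x + b * y)\<^sup>2 + (a - b\<^sup>2) * y\<^sup>2"
    by (simp add: Pair power2_eq_square algebra_simps)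
  moreover have "(x + b * y)\<^sup>2 + (a - b\<^sup>2) * y\<^sup>2 > 0"
  proof (cases "y = 0")
    case True
    then show ?thesis using assms(2) by (simp add: Pair zero_prod_def)
  next
    case False
    then show ?thesis using assms(1) by (simp add: add_nonneg_pos)
  qed
  ultimately show ?thesis by simp
qed

lemma is_ellipse_conicI:
  assumes definite: "b\<^sup>2 < a" and center: "grad (conic a b c d) p = 0"
    and "conic a b c d z = 0" and "z \<noteq> p"
  shows "is_ellipse {x. conic a b c d x = 0}"
proof -
  define K where "K = - conic a b c d p"
  have "conic a b 0 0 (z - p) > 0"
    using assms by (intro conic_quadratic_part_pos) auto
  then have K: "K > 0"
    using assms conic_at_center[OF center, of z] by (simp add: K_def)
  have zero_set: "{x. conic a b c d x = 0} = {x. 1 / (2 * K) * (fst x - fst p)\<^sup>2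
      + 2 * (b / (2 * K)) * (fst x - fst p) * (snd x - snd p) + a / (2 * K) * (snd x - snd p)\<^sup>2 = 1}"
  proof (intro Collect_cong)
    fix x :: "real \<times> real"
    have "conic a b c d x = 0 \<longleftrightarrow> conic a b 0 0 (x - p) / K = 1"
      using conic_at_center[OF center, of x] K by (auto simp: K_def field_simps)
    also have "conic a b 0 0 (x - p) / K = 1 / (2 * K) * (fst x - fst p)\<^sup>2
      + 2 * (b / (2 * K)) * (fst x - fst p) * (snd x - snd p) + a / (2 * K) * (snd x - snd p)\<^sup>2"
      by (cases x, cases p) (simp add: add_divide_distrib)
    finally show "conic a b c d x = 0 \<longleftrightarrow> 1 / (2 * K) * (fst x - fst p)\<^sup>2
      + 2 * (b / (2 * K)) * (fst x - fst p) * (snd x - snd p) + a / (2 * K) * (snd x - snd p)\<^sup>2 = 1" .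
  qed
  show ?thesis
    unfolding is_ellipse_def
  proof (intro exI conjI)
    show "1 / (2 * K) > 0" using K by simp
    show "1 / (2 * K) * (a / (2 * K)) - (b / (2 * K))\<^sup>2 > 0"
      using K definite by (simp add: power2_eq_square field_simps)
  qed (rule zero_set)
qed

lemma is_ellipse_bounded:
  assumes "is_ellipse S"
  shows "bounded S"
proof -
  obtain p A B C where A: "A > 0" and D: "A * C - B\<^sup>2 > 0" and
    S: "S = {x. A * (fst x - fst p)\<^sup>2 + 2 * B * (fst x - fst p) * (snd x - snd p)
             + C * (snd x - snd p)\<^sup>2 = 1}"
    using assms unfolding is_ellipse_def by blast
  have "A * C > 0"
    using D zero_le_power2[of B] by linarith
  then have C: "C > 0"
    using A zero_less_mult_pos by blast
  have "S \<subseteq> cball p (sqrt ((A + C) / (A * C - B\<^sup>2)))"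
  proof
    fix z assume "z \<in> S"
    define x y where "x = fst z - fst p" and "y = snd z - snd p"
    have E: "A * x\<^sup>2 + 2 * B * x * y + C * y\<^sup>2 = 1"
      using \<open>z \<in> S\<close> by (simp add: S x_def y_def)
    have "A = (A * x + B * y)\<^sup>2 + (A * C - B\<^sup>2) * y\<^sup>2"
      using arg_cong[OF E, of "(*) A"] by (simp add: power2_eq_square algebra_simps)
    then have y: "(A * C - B\<^sup>2) * y\<^sup>2 \<le> A"
      using zero_le_power2[of "A * x + B * y"] by linarith
    have "C = (C * y + B * x)\<^sup>2 + (A * C - B\<^sup>2) * x\<^sup>2"
      using arg_cong[OF E, of "(*) C"] by (simp add: power2_eq_square algebra_simps)
    then have x: "(A * C - B\<^sup>2) * x\<^sup>2 \<le> C"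
      using zero_le_power2[of "C * y + B * x"] by linarith
    have "x\<^sup>2 + y\<^sup>2 \<le> (A + C) / (A * C - B\<^sup>2)"
      using x y D by (simp add: field_simps)
    then have "sqrt (x\<^sup>2 + y\<^sup>2) \<le> sqrt ((A + C) / (A * C - B\<^sup>2))"
      by (rule real_sqrt_le_mono)
    then show "z \<in> cball p (sqrt ((A + C) / (A * C - B\<^sup>2)))"
      by (simp add: dist_norm norm_prod_def x_def y_def power2_commute)
  qed
  then show ?thesis
    using bounded_cball bounded_subset by blast
qed

text \<open>The witness solves the quadratic in x at a height y whose sign makes the discriminant
  (b^2 - a) y^2 + 2 (b c - d) y + c^2 nonnegative.\<close>
lemma conic_zeros_unbounded:
  assumes "a \<le> b\<^sup>2"
  shows "\<exists>x y. R \<le> \<bar>y\<bar> \<and> conic a b c d (x, y) = 0"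
proof -
  define y where "y = (if d \<le> b * c then \<bar>R\<bar> else - \<bar>R\<bar>)"
  define D where "D = (b\<^sup>2 - a) * y\<^sup>2 + 2 * (b * c - d) * y + c\<^sup>2"
  have "(b\<^sup>2 - a) * y\<^sup>2 \<ge> 0"
    using assms by simp
  moreover have "2 * (b * c - d) * y \<ge> 0"
    by (cases "d \<le> b * c") (simp_all add: y_def mult_nonpos_nonneg)
  ultimately have D: "D \<ge> 0"
    unfolding D_def by (intro add_nonneg_nonneg zero_le_power2)
  define x where "x = sqrt D - (b * y + c)"
  have "2 * conic a b c d (x, y) = (x + (b * y + c))\<^sup>2 - D"
    by (simp add: D_def power2_eq_square field_simps)
  also have "(x + (b * y + c))\<^sup>2 = D"
    using D by (simp add: x_def)
  finally have "conic a b c d (x, y) = 0"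
    by (simp del: conic_Pair)
  moreover have "R \<le> \<bar>y\<bar>"
    by (simp add: y_def)
  ultimately show ?thesis by blast
qed

lemma is_ellipse_conic_definite:
  assumes "is_ellipse {z. conic a b c d z = 0}"
  shows "b\<^sup>2 < a"
proof (rule ccontr)
  assume "\<not> b\<^sup>2 < a"
  obtain R where R: "\<And>z. conic a b c d z = 0 \<Longrightarrow> norm z \<le> R"
    using is_ellipse_bounded[OF assms] unfolding bounded_iff by blast
  obtain x y where "R + 1 \<le> \<bar>y\<bar>" and "conic a b c d (x, y) = 0"
    using conic_zeros_unbounded \<open>\<not> b\<^sup>2 < a\<close> by (meson not_less)
  moreover have "\<bar>y\<bar> \<le> norm (x, y)"
    using norm_snd_le[of y x] by simp
  ultimately show False
    using R by fastforce
qed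

definition admissible :: "real \<Rightarrow> real \<Rightarrow> real \<Rightarrow> (real \<times> real \<Rightarrow> real) \<Rightarrow> bool" where
  "admissible l k m \<phi> \<longleftrightarrow>
     \<phi> (l, 0) = 0 \<and> \<phi> (0, 0) = 0 \<and> \<phi> (m, m * k) = 0 \<and>
     (\<exists>t>0. (0, 0) - (l, 0) = t *\<^sub>R (- grad \<phi> (l, 0))) \<and>
     (\<exists>t>0. (m, m * k) - (0, 0) = t *\<^sub>R (- grad \<phi> (0, 0))) \<and>
     is_ellipse {x. \<phi> x = 0}"

lemma admissible_coefficients:
  assumes "l > 0" and "m > 0" and "admissible l k m (conic a b c d)"
  shows "c = - l / 2" and "d = - b * l" and "k = 2 * b"
proof -
  obtain t s where "t > 0" and t: "(0, 0) - (l, 0) = t *\<^sub>R (- grad (conic a b c d) (l, 0))"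
    and s: "(m, m * k) - (0, 0) = s *\<^sub>R (- grad (conic a b c d) (0, 0))"
    and X: "conic a b c d (l, 0) = 0"
    using assms(3) unfolding admissible_def by blast
  have "l * (l + 2 * c) = 0"
    using X by (simp add: power2_eq_square field_simps)
  then show c: "c = - l / 2"
    using \<open>l > 0\<close> by simp
  show d: "d = - b * l"
    using t \<open>t > 0\<close> by (simp add: grad_conic)
  have "m = s * l / 2" and "m * k = s * b * l"
    using s by (simp_all add: grad_conic c d)
  then have "m * k = m * (2 * b)"
    by simp
  then show "k = 2 * b"
    using \<open>m > 0\<close> by simp
qed

lemma center_of_admissible:
  assumes "l > 0" and "k > 0" and "m > 0" and adm: "admissible l k m (conic a b c d)"
    and center: "grad (conic a b c d) (u, v) = 0"
  shows "v > 0" and "u = l / 2 - k / 2 * v"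
proof -
  note coeffs = admissible_coefficients[OF \<open>l > 0\<close> \<open>m > 0\<close> adm]
  have "b\<^sup>2 < a"
    using adm is_ellipse_conic_definite unfolding admissible_def by blast
  have u: "u + b * v - l / 2 = 0" and v: "b * u + a * v - b * l = 0"
    using center coeffs by (simp_all add: grad_conic zero_prod_def)
  then have u: "u = l / 2 - b * v"
    by simp
  then show "u = l / 2 - k / 2 * v"
    using coeffs by simp
  have "(a - b\<^sup>2) * v = b * l / 2"
    using v unfolding u by (simp add: power2_eq_square field_simps)
  moreover have "b * l / 2 > 0" and "a - b\<^sup>2 > 0"
    using coeffs \<open>b\<^sup>2 < a\<close> \<open>k > 0\<close> \<open>l > 0\<close> by simp_all
  ultimately show "v > 0"
    by (metis zero_less_mult_pos)
qed

lemma admissible_with_center: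
  assumes "l > 0" and "k > 0" and "v > 0"
  shows "\<exists>m>0. \<exists>a b c d. admissible l k m (conic a b c d) \<and>
           grad (conic a b c d) (l / 2 - k / 2 * v, v) = 0"
proof -
  define b where "b = k / 2"
  define a where "a = b\<^sup>2 + b * l / (2 * v)"
  define c where "c = - l / 2"
  define d where "d = - b * l"
  define m where "m = l * (1 + k\<^sup>2) / (1 + k\<^sup>2 + a * k\<^sup>2)"
  have "b * l / (2 * v) > 0"
    using assms by (simp add: b_def)
  then have definite: "b\<^sup>2 < a"
    by (simp add: a_def)
  then have "a > 0"
    using zero_le_power2[of b] by linarith
  then have "1 + k\<^sup>2 + a * k\<^sup>2 > 0"
    by (simp add: add_pos_nonneg)
  then have "m > 0" and m: "m * (1 + k\<^sup>2 + a * k\<^sup>2) = l * (1 + k\<^sup>2)"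
    using \<open>l > 0\<close> by (simp_all add: m_def add_pos_nonneg)
  have center: "grad (conic a b c d) (l / 2 - k / 2 * v, v) = 0"
    using \<open>v > 0\<close> by (simp add: grad_conic zero_prod_def a_def b_def c_def d_def power2_eq_square field_simps)
  have "conic a b c d (m, m * k) = m / 2 * (m * (1 + k\<^sup>2 + a * k\<^sup>2) - l * (1 + k\<^sup>2))"
    by (simp add: b_def c_def d_def power2_eq_square field_simps)
  then have "conic a b c d (m, m * k) = 0"
    by (simp add: m)
  moreover have "conic a b c d (l, 0) = 0" and "conic a b c d (0, 0) = 0"
    by (simp_all add: c_def power2_eq_square)
  moreover have "\<exists>t>0. (0, 0) - (l, 0) = t *\<^sub>R (- grad (conic a b c d) (l, 0))"
    by (intro exI[of _ 2]) (simp add: grad_conic c_def d_def)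
  moreover have "\<exists>t>0. (m, m * k) - (0, 0) = t *\<^sub>R (- grad (conic a b c d) (0, 0))"
    using \<open>l > 0\<close> \<open>m > 0\<close> by (intro exI[of _ "2 * m / l"]) (simp add: grad_conic b_def c_def d_def)
  moreover have "is_ellipse {x. conic a b c d x = 0}"
    using \<open>v > 0\<close> by (intro is_ellipse_conicI[OF definite center, of 0]) (simp_all add: zero_prod_def)
  ultimately have "admissible l k m (conic a b c d)"
    unfolding admissible_def by blast
  then show ?thesis
    using \<open>m > 0\<close> center by blast
qed

theorem lemma3:
  fixes l \<theta> :: real
  assumes "l > 0" and "0 < \<theta>" and "\<theta> < pi / 2"
  shows "{p. \<exists>m>0. \<exists>a b c d.
            let \<phi> = conic a b c d; X = (l, 0); Y = (0, 0); Z = (m, m * tan \<theta>) in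
              \<phi> X = 0 \<and> \<phi> Y = 0 \<and> \<phi> Z = 0 \<and>
              (\<exists>t>0. Y - X = t *\<^sub>R (- grad \<phi> X)) \<and>
              (\<exists>t>0. Z - Y = t *\<^sub>R (- grad \<phi> Y)) \<and>
              is_ellipse {x. \<phi> x = 0} \<and>
              grad \<phi> p = 0}
         = {(u, v). v > 0 \<and> u = l / 2 - tan \<theta> / 2 * v}"
proof -
  have "tan \<theta> > 0"
    using assms by (simp add: tan_gt_zero)
  have "{p. \<exists>m>0. \<exists>a b c d.
            let \<phi> = conic a b c d; X = (l, 0); Y = (0, 0); Z = (m, m * tan \<theta>) in
              \<phi> X = 0 \<and> \<phi> Y = 0 \<and> \<phi> Z = 0 \<and>
              (\<exists>t>0. Y - X = t *\<^sub>R (- grad \<phi> X)) \<and>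
              (\<exists>t>0. Z - Y = t *\<^sub>R (- grad \<phi> Y)) \<and>
              is_ellipse {x. \<phi> x = 0} \<and>
              grad \<phi> p = 0}
      = {p. \<exists>m>0. \<exists>a b c d. admissible l (tan \<theta>) m (conic a b c d) \<and> grad (conic a b c d) p = 0}"
    by (simp add: admissible_def Let_def)
  also have "\<dots> = {(u, v). v > 0 \<and> u = l / 2 - tan \<theta> / 2 * v}"
  proof (intro set_eqI iffI)
    fix p :: "real \<times> real"
    assume "p \<in> {p. \<exists>m>0. \<exists>a b c d. admissible l (tan \<theta>) m (conic a b c d) \<and> grad (conic a b c d) p = 0}"
    then show "p \<in> {(u, v). v > 0 \<and> u = l / 2 - tan \<theta> / 2 * v}"
      using center_of_admissible[OF \<open>l > 0\<close> \<open>tan \<theta> > 0\<close>] by (cases p) blast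
  next
    fix p :: "real \<times> real"
    assume "p \<in> {(u, v). v > 0 \<and> u = l / 2 - tan \<theta> / 2 * v}"
    then show "p \<in> {p. \<exists>m>0. \<exists>a b c d. admissible l (tan \<theta>) m (conic a b c d) \<and> grad (conic a b c d) p = 0}"
      using admissible_with_center[OF \<open>l > 0\<close> \<open>tan \<theta> > 0\<close>] by auto
  qed
  finally show ?thesis .
qed

end
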